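(* Let $X$ be the Brady complex of $B_4$, let $R$ be a lozenge of $X$ and let $A$ be a vertex of $R$ at which the internal angle of $R$ is $2\pi/3$. Then there are exactly two lozenges $R_1,R_2$ of $X$ such that $R\cap R_1=R\cap R_2=\{A\}$ and such that each of $R\cup R_1$ and $R\cup R_2$ is contained in a flat hexagon of $X$.
   Context: Let $B_4=\langle a,b,c,d,e,f\mid ba=ae=eb,\ de=ec=cd,\ bc=cf=fb,\ df=fa=ad,\ ca=ac,\ ef=fe\rangle$ and $x=bac$. There are exactly sixteen factorizations $x=a_1a_2a_3$ with $a_i\in\{a,\dots,f\}$ (the cyclic length-3 subwords of $bcadefbacdfe$ and $faecfaecfaec$). Brady's complex $V$ has one vertex and one Euclidean tetrahedron per factorization, with edges $v_{i-1}v_i$ labelled $a_i$ (length 1), $v_0v_2,v_1v_3$ labelled $a_1a_2,a_2a_3$ (length $\sqrt2$), $v_0v_3$ labelled $x$ (length $\sqrt3$), glued along equally labelled edges; its universal cover $Y$ is CAT(0) and splits isometrically as $X\times\mathbb{R}$, the $\mathbb{R}$-factor being the direction of the central element $z=x^4$. The Brady complex $X$ is a 2-dimensional CAT(0) simplicial complex with Euclidean equilateral triangle faces; each vertex link is isomorphic to the graph obtained from the incidence graph of the Fano plane by deleting two adjacent vertices, with edge length $\pi/3$. A lozenge of $X$ is the union of two faces glued along an edge contained in exactly two faces; a flat hexagon is a subset isometric to a regular Euclidean hexagon made of faces. *)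

theory Defs
  imports Main
begin

section \<open>The braid group B_4 in the dual (Birman-Ko-Lee) presentation\<close>

datatype gen = Ga | Gb | Gc | Gd | Ge | Gf

type_synonym letter = "gen \<times> bool"   (* (g, True) = g, (g, False) = g^-1 *)
type_synonym word = "letter list"

definition pos :: "gen list \<Rightarrow> word" where
  "pos gs = map (\<lambda>g. (g, True)) gs"

definition rels :: "(gen list \<times> gen list) set" where
  "rels = {([Gb,Ga],[Ga,Ge]), ([Ga,Ge],[Ge,Gb]),
           ([Gd,Ge],[Ge,Gc]), ([Ge,Gc],[Gc,Gd]),
           ([Gb,Gc],[Gc,Gf]), ([Gc,Gf],[Gf,Gb]),
           ([Gd,Gf],[Gf,Ga]), ([Gf,Ga],[Ga,Gd]),
           ([Gc,Ga],[Ga,Gc]), ([Ge,Gf],[Gf,Ge])}"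

definition basic_pairs :: "(word \<times> word) set" where
  "basic_pairs = {([(g,s),(g,\<not>s)], []) | g s. True} \<union> {([], [(g,s),(g,\<not>s)]) | g s. True}
     \<union> {(pos l, pos r) | l r. (l, r) \<in> rels} \<union> {(pos r, pos l) | l r. (l, r) \<in> rels}"

definition bstep :: "word \<Rightarrow> word \<Rightarrow> bool" where
  "bstep u v \<longleftrightarrow> (\<exists>p s l r. (l, r) \<in> basic_pairs \<and> u = p @ l @ s \<and> v = p @ r @ s)"

definition beq :: "word \<Rightarrow> word \<Rightarrow> bool" where
  "beq = bstep\<^sup>*\<^sup>*"

definition xword :: word where "xword = pos [Gb, Ga, Gc]"

definition xpow :: "nat \<Rightarrow> word" where "xpow n = concat (replicate n xword)"

text \<open>Vertices of X: cosets g<x> (the projection of Y along the x-direction, i.e. the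
  R-factor; vertices of Y are elements of B_4).\<close>
type_synonym vertex = "word set"

definition vert :: "word \<Rightarrow> vertex" where
  "vert w = {v. \<exists>n m. beq (w @ xpow n) (v @ xpow m)}"

definition cyc3 :: "gen list \<Rightarrow> (gen \<times> gen \<times> gen) set" where
  "cyc3 w = {(w ! i, w ! ((i+1) mod length w), w ! ((i+2) mod length w)) | i. i < length w}"

text \<open>The sixteen factorizations x = a1 a2 a3.\<close>
definition facts :: "(gen \<times> gen \<times> gen) set" where
  "facts = cyc3 [Gb,Gc,Ga,Gd,Ge,Gf,Gb,Ga,Gc,Gd,Gf,Ge] \<union> cyc3 [Gf,Ga,Ge,Gc,Gf,Ga,Ge,Gc,Gf,Ga,Ge,Gc]"

text \<open>Faces of X: projections of the tetrahedra g.(1, a1, a1a2, x) of Y.\<close>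
definition faces :: "vertex set set" where
  "faces = {{vert w, vert (w @ pos [a1]), vert (w @ pos [a1, a2])} | w a1 a2 a3. (a1, a2, a3) \<in> facts}"

definition lozenge :: "vertex set set \<Rightarrow> bool" where
  "lozenge R \<longleftrightarrow> (\<exists>T1 T2. R = {T1, T2} \<and> T1 \<in> faces \<and> T2 \<in> faces \<and> T1 \<noteq> T2
      \<and> card (T1 \<inter> T2) = 2 \<and> card {T \<in> faces. T1 \<inter> T2 \<subseteq> T} = 2)"

definition flat_hexagon :: "vertex set set \<Rightarrow> bool" where
  "flat_hexagon H \<longleftrightarrow> (\<exists>c u. inj_on u {..<6::nat} \<and> c \<notin> u ` {..<6}
      \<and> H = {{c, u i, u ((i + 1) mod 6)} | i. i < 6} \<and> H \<subseteq> faces)"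

end

(* Since conjugation by x permutes the generators, the star
   of every vertex vert g looks the same: its faces are the triangles {g, g a, g a b} for the
   sixteen factorizations x = a b c, i.e. the sixteen edges of the link, a bipartite graph between
   the six generators and the six elements of length two dividing x (distinct words here give
   distinct vertices, as the exponent sum and the image in S_4 show).  A lozenge having A on its
   middle edge is a path of length two in the link of A through a vertex of degree two.  A flat
   hexagon containing R and R1 is centred at A, and its rim alternates between link vertices of
   length 1 and 2; so R1 is a lozenge at A, disjoint from R, such that the six link vertices of R
   and R1 contain at most three of each length.  A finite check over the eight lozenges of the
   link shows that exactly two such R1 exist for each R, and that both close up to a hexagon. *)

theory Submission
  imports Defs
begin

section \<open>Equality of words in \<open>B\<^sub>4\<close>\<close>

lemma bstep_sym: "bstep u v \<Longrightarrow> bstep v u"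
proof -
  have "(l, r) \<in> basic_pairs \<Longrightarrow> (r, l) \<in> basic_pairs" for l r
    unfolding basic_pairs_def by auto
  then show "bstep u v \<Longrightarrow> bstep v u"
    unfolding bstep_def by blast
qed

lemma beq_refl [simp]: "beq u u"
  unfolding beq_def by simp

lemma beq_trans [trans]: "beq u v \<Longrightarrow> beq v w \<Longrightarrow> beq u w"
  unfolding beq_def by (rule rtranclp_trans)

lemma beq_sym: "beq u v \<Longrightarrow> beq v u"
  unfolding beq_def
proof (induction rule: rtranclp_induct)
  case (step y z)
  then show ?case by (meson bstep_sym converse_rtranclp_into_rtranclp)
qed simp

lemma bstep_append: "bstep u v \<Longrightarrow> bstep (p @ u @ s) (p @ v @ s)"
proof -
  assume "bstep u v"
  then obtain p' s' l r where "(l, r) \<in> basic_pairs" "u = p' @ l @ s'" "v = p' @ r @ s'"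
    unfolding bstep_def by blast
  then show ?thesis
    unfolding bstep_def by (intro exI[of _ "p @ p'"] exI[of _ "s' @ s"] exI[of _ l] exI[of _ r]) auto
qed

lemma beq_append: "beq u v \<Longrightarrow> beq (p @ u @ s) (p @ v @ s)"
  unfolding beq_def
proof (induction rule: rtranclp_induct)
  case (step y z)
  then show ?case by (meson bstep_append rtranclp.rtrancl_into_rtrancl)
qed simp

lemma beq_append_left: "beq u v \<Longrightarrow> beq (p @ u) (p @ v)"
  using beq_append[of u v p "[]"] by simp

lemma beq_append_right: "beq u v \<Longrightarrow> beq (u @ s) (v @ s)"
  using beq_append[of u v "[]" s] by simp

lemma pos_Nil [simp]: "pos [] = []"
  by (simp add: pos_def)

lemma pos_append: "pos (u @ v) = pos u @ pos v"
  by (simp add: pos_def)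

lemma beq_relator:
  assumes "(l, r) \<in> rels \<or> (r, l) \<in> rels"
  shows "beq (pos (p @ l @ s)) (pos (p @ r @ s))"
proof -
  have "(pos l, pos r) \<in> basic_pairs"
    using assms unfolding basic_pairs_def by blast
  then have "bstep (pos p @ pos l @ pos s) (pos p @ pos r @ pos s)"
    unfolding bstep_def by blast
  then show ?thesis
    unfolding beq_def pos_append by simp
qed

definition gens :: "gen list" where
  "gens = [Ga, Gb, Gc, Gd, Ge, Gf]"

definition relator_alternatives :: "gen list \<Rightarrow> gen list list" where
  "relator_alternatives u =
     [v \<leftarrow> map (\<lambda>(c, d). [c, d]) (List.product gens gens). (u, v) \<in> rels \<or> (v, u) \<in> rels]"

fun moves :: "gen list \<Rightarrow> gen list list" where
  "moves (a # b # w) = map (\<lambda>v. v @ w) (relator_alternatives [a, b]) @ map ((#) a) (moves (b # w))"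
| "moves _ = []"

fun reach :: "nat \<Rightarrow> gen list list \<Rightarrow> gen list list" where
  "reach 0 ws = ws"
| "reach (Suc n) ws = reach n (remdups (ws @ concat (map moves ws)))"

lemma relator_alternatives_rels:
  "v \<in> set (relator_alternatives u) \<Longrightarrow> (u, v) \<in> rels \<or> (v, u) \<in> rels"
  by (simp add: relator_alternatives_def)

lemma beq_moves: "v \<in> set (moves w) \<Longrightarrow> beq (pos w) (pos v)"
proof (induction w arbitrary: v rule: moves.induct)
  case (1 a b w)
  from "1.prems" consider u where "v = u @ w" "u \<in> set (relator_alternatives [a, b])"
    | v' where "v = a # v'" "v' \<in> set (moves (b # w))"
    by auto
  then show ?case
  proof cases
    case 1
    then show ?thesis
      using beq_relator[OF relator_alternatives_rels, of u "[a, b]" "[]" w] by simp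
  next
    case 2
    then show ?thesis
      using beq_append_left[OF "1.IH"[OF 2(2)], of "pos [a]"] by (simp add: pos_append[symmetric])
  qed
qed simp_all

lemma beq_reach: "v \<in> set (reach n ws) \<Longrightarrow> \<exists>w\<in>set ws. beq (pos w) (pos v)"
proof (induction n arbitrary: ws)
  case (Suc n)
  have "v \<in> set (reach n (remdups (ws @ concat (map moves ws))))"
    using Suc.prems by simp
  from Suc.IH[OF this] obtain u
    where u: "u \<in> set (remdups (ws @ concat (map moves ws)))" "beq (pos u) (pos v)" ..
  from u(1) have "u \<in> set ws \<or> (\<exists>w\<in>set ws. u \<in> set (moves w))"
    by simp
  then obtain w where "w \<in> set ws" "beq (pos w) (pos u)"
    using beq_refl beq_moves by blast
  then show ?case
    using beq_trans[OF _ u(2)] by blast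
qed (intro bexI[of _ v], simp_all)

section \<open>The element \<open>x\<close> and its factorizations\<close>

definition fact_list :: "(gen \<times> gen \<times> gen) list" where
  "fact_list =
     [(Ga, Gc, Gd), (Ga, Gd, Ge), (Ga, Ge, Gc), (Gb, Ga, Gc), (Gb, Gc, Ga), (Gc, Ga, Gd),
      (Gc, Gd, Gf), (Gc, Gf, Ga), (Gd, Ge, Gf), (Gd, Gf, Ge), (Ge, Gb, Gc), (Ge, Gc, Gf),
      (Ge, Gf, Gb), (Gf, Ga, Ge), (Gf, Gb, Ga), (Gf, Ge, Gb)]"

lemma facts_eq: "facts = set fact_list"
proof -
  have cyc3_eq: "cyc3 w = set (map (\<lambda>i. (w ! i, w ! ((i + 1) mod length w), w ! ((i + 2) mod length w)))
                     [0..<length w])" for w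
    unfolding cyc3_def by auto
  show ?thesis
    unfolding facts_def fact_list_def cyc3_eq by (simp add: upt_rec) auto
qed

lemma beq_xword_fact: "(a, b, c) \<in> facts \<Longrightarrow> beq xword (pos [a, b, c])"
proof -
  have "\<forall>(a, b, c)\<in>set fact_list. [a, b, c] \<in> set (reach 5 [[Gb, Ga, Gc]])"
    by (simp add: fact_list_def rels_def gens_def relator_alternatives_def numeral_eq_Suc)
  then show "(a, b, c) \<in> facts \<Longrightarrow> beq xword (pos [a, b, c])"
    unfolding facts_eq xword_def using beq_reach by fastforce
qed

text \<open>Conjugation by \<open>x\<close> permutes the generators: \<open>s x = x (tau s)\<close>.\<close>
fun tau :: "gen \<Rightarrow> gen" where
  "tau Ga = Gf" | "tau Gb = Gd" | "tau Gc = Ge" | "tau Gd = Gb" | "tau Ge = Ga" | "tau Gf = Gc"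

lemma facts_rotate: "(a, b, c) \<in> facts \<Longrightarrow> (b, c, tau a) \<in> facts"
proof -
  have "\<forall>(a, b, c)\<in>set fact_list. (b, c, tau a) \<in> set fact_list"
    by (simp add: fact_list_def)
  then show "(a, b, c) \<in> facts \<Longrightarrow> (b, c, tau a) \<in> facts"
    unfolding facts_eq by fastforce
qed

lemma facts_tau: "(a, b, c) \<in> facts \<Longrightarrow> (tau a, tau b, tau c) \<in> facts"
proof -
  have "\<forall>(a, b, c)\<in>set fact_list. (tau a, tau b, tau c) \<in> set fact_list"
    by (simp add: fact_list_def)
  then show "(a, b, c) \<in> facts \<Longrightarrow> (tau a, tau b, tau c) \<in> facts"
    unfolding facts_eq by fastforce
qed

lemma facts_funpow_tau:
  "(a, b, c) \<in> facts \<Longrightarrow> ((tau ^^ k) a, (tau ^^ k) b, (tau ^^ k) c) \<in> facts"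
  by (induction k) (simp_all add: facts_tau)

lemma facts_first_letter: "\<exists>b c. (s, b, c) \<in> facts"
  by (cases s) (auto simp: facts_eq fact_list_def)

text \<open>Write \<open>x = s b c\<close>; rotating this factorization gives \<open>x = b c (tau s)\<close>, hence
  \<open>s x = s b c (tau s) = x (tau s)\<close>.\<close>
lemma beq_letter_xword: "beq (pos [s] @ xword) (xword @ pos [tau s])"
proof -
  obtain b c where f: "(s, b, c) \<in> facts"
    using facts_first_letter by blast
  have "beq (pos [s] @ xword) (pos [s] @ pos [b, c, tau s])"
    by (rule beq_append_left[OF beq_xword_fact[OF facts_rotate[OF f]]])
  also have "pos [s] @ pos [b, c, tau s] = pos [s, b, c] @ pos [tau s]"
    by (simp add: pos_def)
  also have "beq \<dots> (xword @ pos [tau s])"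
    by (rule beq_append_right[OF beq_sym[OF beq_xword_fact[OF f]]])
  finally show ?thesis .
qed

lemma beq_word_xword: "beq (pos ws @ xword) (xword @ pos (map tau ws))"
proof (induction ws)
  case (Cons s ws)
  have "pos (s # ws) @ xword = pos [s] @ (pos ws @ xword)"
    by (simp add: pos_def)
  also have "beq \<dots> (pos [s] @ (xword @ pos (map tau ws)))"
    by (rule beq_append_left[OF Cons.IH])
  also have "pos [s] @ (xword @ pos (map tau ws)) = (pos [s] @ xword) @ pos (map tau ws)"
    by simp
  also have "beq \<dots> ((xword @ pos [tau s]) @ pos (map tau ws))"
    by (rule beq_append_right[OF beq_letter_xword])
  also have "(xword @ pos [tau s]) @ pos (map tau ws) = xword @ pos (map tau (s # ws))"
    by (simp add: pos_def)
  finally show ?case .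
qed simp

lemma xpow_0 [simp]: "xpow 0 = []"
  by (simp add: xpow_def)

lemma xpow_Suc: "xpow (Suc n) = xword @ xpow n"
  by (simp add: xpow_def)

lemma xpow_add: "xpow (n + m) = xpow n @ xpow m"
  by (simp add: xpow_def replicate_add)

lemma beq_word_xpow: "beq (pos ws @ xpow k) (xpow k @ pos (map (tau ^^ k) ws))"
proof (induction k arbitrary: ws)
  case (Suc k)
  have "pos ws @ xpow (Suc k) = (pos ws @ xword) @ xpow k"
    by (simp add: xpow_Suc)
  also have "beq \<dots> ((xword @ pos (map tau ws)) @ xpow k)"
    by (rule beq_append_right[OF beq_word_xword])
  also have "(xword @ pos (map tau ws)) @ xpow k = xword @ (pos (map tau ws) @ xpow k)"
    by simp
  also have "beq \<dots> (xword @ (xpow k @ pos (map (tau ^^ k) (map tau ws))))"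
    by (rule beq_append_left[OF Suc.IH])
  also have "xword @ (xpow k @ pos (map (tau ^^ k) (map tau ws))) = xpow (Suc k) @ pos (map (tau ^^ Suc k) ws)"
    by (simp add: xpow_Suc funpow_swap1 comp_def)
  finally show ?case .
qed simp

lemma funpow_tau_4: "tau ^^ 4 = id"
proof
  fix s show "(tau ^^ 4) s = id s"
    by (cases s) (simp_all add: numeral_eq_Suc)
qed

lemma funpow_tau_mod: "tau ^^ k = tau ^^ (k mod 4)"
proof -
  have "tau ^^ k = (tau ^^ 4) ^^ (k div 4) \<circ> tau ^^ (k mod 4)"
    by (metis div_mod_decomp funpow_add funpow_mult mult.commute)
  then show ?thesis
    by (simp add: funpow_tau_4)
qed

section \<open>Vertices of \<open>X\<close>\<close>

fun degree :: "word \<Rightarrow> int" where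
  "degree [] = 0"
| "degree (l # w) = (if snd l then 1 else -1) + degree w"

definition transp :: "nat \<Rightarrow> nat \<Rightarrow> nat \<Rightarrow> nat" where
  "transp i j k = (if k = i then j else if k = j then i else k)"

fun gen_perm :: "gen \<Rightarrow> nat \<Rightarrow> nat" where
  "gen_perm Ga = transp 0 1" | "gen_perm Gb = transp 0 2" | "gen_perm Gc = transp 2 3"
| "gen_perm Gd = transp 1 3" | "gen_perm Ge = transp 1 2" | "gen_perm Gf = transp 0 3"

fun perm :: "word \<Rightarrow> nat \<Rightarrow> nat" where
  "perm [] = id"
| "perm (l # w) = gen_perm (fst l) \<circ> perm w"

lemma degree_append: "degree (u @ v) = degree u + degree v"
  by (induction u) auto

lemma perm_append: "perm (u @ v) = perm u \<circ> perm v"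
  by (induction u) (auto simp: comp_assoc)

lemma gen_perm_involution: "gen_perm s (gen_perm s k) = k"
  by (cases s) (auto simp: transp_def)

lemma bij_perm: "bij (perm w)"
proof (induction w)
  case (Cons l w)
  have "bij (gen_perm (fst l))"
    by (metis bijI' gen_perm_involution)
  then show ?case
    using bij_comp[OF Cons.IH] by (simp only: perm.simps)
qed (simp only: perm.simps bij_id)

lemma degree_pos: "degree (pos ws) = int (length ws)"
  by (induction ws) (auto simp: pos_def)

lemma bstep_invariants: "bstep u v \<Longrightarrow> degree u = degree v \<and> perm u = perm v"
proof -
  have "degree l = degree r \<and> perm l = perm r" if "(l, r) \<in> basic_pairs" for l r
  proof -
    have rel: "degree (pos l) = degree (pos r) \<and> perm (pos l) = perm (pos r)"
      if "(l, r) \<in> rels" for l r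
      using that unfolding rels_def by (auto simp: pos_def fun_eq_iff transp_def)
    from \<open>(l, r) \<in> basic_pairs\<close> show ?thesis
      unfolding basic_pairs_def using rel by (auto simp: fun_eq_iff gen_perm_involution)
  qed
  then show "bstep u v \<Longrightarrow> degree u = degree v \<and> perm u = perm v"
    unfolding bstep_def by (auto simp: degree_append perm_append)
qed

lemma beq_invariants: "beq u v \<Longrightarrow> degree u = degree v \<and> perm u = perm v"
  unfolding beq_def by (induction rule: rtranclp_induct) (auto dest: bstep_invariants)

definition same_coset :: "word \<Rightarrow> word \<Rightarrow> bool" where
  "same_coset u v \<longleftrightarrow> (\<exists>n m. beq (u @ xpow n) (v @ xpow m))"

lemma same_coset_trans:
  assumes "same_coset u v" "same_coset v w"
  shows "same_coset u w"
proof -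
  obtain n m p q where uv: "beq (u @ xpow n) (v @ xpow m)" and vw: "beq (v @ xpow p) (w @ xpow q)"
    using assms unfolding same_coset_def by blast
  have "beq (u @ xpow (n + p)) ((v @ xpow p) @ xpow m)"
    using beq_append_right[OF uv, of "xpow p"] by (simp add: xpow_add[symmetric] add.commute)
  also have "beq \<dots> ((w @ xpow q) @ xpow m)"
    by (rule beq_append_right[OF vw])
  also have "(w @ xpow q) @ xpow m = w @ xpow (q + m)"
    by (simp add: xpow_add)
  finally show ?thesis
    unfolding same_coset_def by blast
qed

lemma vert_eq_iff: "vert u = vert v \<longleftrightarrow> same_coset u v"
proof -
  have vert: "vert u = Collect (same_coset u)" for u
    unfolding vert_def same_coset_def by simp
  have refl: "same_coset u u" for u
    unfolding same_coset_def using beq_refl by blast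
  have sym: "same_coset u v \<Longrightarrow> same_coset v u" for u v
    unfolding same_coset_def using beq_sym by blast
  show ?thesis
    unfolding vert using refl sym same_coset_trans by blast
qed

lemma vert_beq: "beq u v \<Longrightarrow> vert u = vert v"
  unfolding vert_eq_iff same_coset_def by (intro exI[of _ 0]) simp

lemma vert_append_xword: "vert (w @ xword) = vert w"
  unfolding vert_eq_iff same_coset_def by (intro exI[of _ 0] exI[of _ 1]) (simp add: xpow_def)

text \<open>Two representatives of a vertex differ by a power of \<open>x\<close>, which moves the
  neighbouring vertices by a power of \<open>tau\<close>.\<close>
lemma vert_translate:
  assumes "vert g = vert w"
  obtains k where "\<And>ws. vert (w @ pos ws) = vert (g @ pos (map (tau ^^ k) ws))"
proof -
  obtain n m where h: "beq (g @ xpow n) (w @ xpow m)"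
    using assms unfolding vert_eq_iff same_coset_def by blast
  have "tau ^^ n \<circ> tau ^^ (m + 3 * n) = tau ^^ (m + 4 * n)"
    by (simp add: funpow_add[symmetric] algebra_simps)
  also have "\<dots> = tau ^^ m"
    by (subst (1 2) funpow_tau_mod) simp
  finally have tau_m: "tau ^^ m = tau ^^ n \<circ> tau ^^ (m + 3 * n)" ..
  have "vert (w @ pos ws) = vert (g @ pos (map (tau ^^ (m + 3 * n)) ws))" for ws
  proof -
    have "beq ((w @ pos ws) @ xpow m)
        (w @ (xpow m @ pos (map (tau ^^ n) (map (tau ^^ (m + 3 * n)) ws))))"
      using beq_append_left[OF beq_word_xpow, of w ws m] tau_m by simp
    also have "beq \<dots> ((g @ xpow n) @ pos (map (tau ^^ n) (map (tau ^^ (m + 3 * n)) ws)))"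
      using beq_append_right[OF beq_sym[OF h]] by simp
    also have "beq \<dots> ((g @ pos (map (tau ^^ (m + 3 * n)) ws)) @ xpow n)"
      using beq_append_left[OF beq_sym[OF beq_word_xpow[of "map (tau ^^ (m + 3 * n)) ws" n]], of g]
      by simp
    finally show ?thesis
      unfolding vert_eq_iff same_coset_def by blast
  qed
  then show ?thesis
    using that by blast
qed

text \<open>Short positive words from a common vertex are separated by the invariants: their lengths
  are read off from the degree modulo \<open>3 = degree x\<close>.\<close>
lemma vert_append_pos_eqD:
  assumes "vert (g @ pos p) = vert (g @ pos q)" "length p < 3" "length q < 3"
  shows "length p = length q \<and> perm (pos p) = perm (pos q)"
proof -
  obtain n m where h: "beq ((g @ pos p) @ xpow n) ((g @ pos q) @ xpow m)"
    using assms(1) unfolding vert_eq_iff same_coset_def by blast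
  have degree_xpow: "degree (xpow k) = 3 * int k" for k
    by (induction k) (simp_all add: xpow_Suc degree_append xword_def pos_def)
  from beq_invariants[OF h]
  have d: "int (length p) + 3 * int n = int (length q) + 3 * int m"
    and a: "perm g \<circ> perm (pos p) \<circ> perm (xpow n) = perm g \<circ> perm (pos q) \<circ> perm (xpow m)"
    by (auto simp: degree_append degree_pos degree_xpow perm_append comp_assoc)
  from d assms(2,3) have "length p = length q" "n = m"
    by presburger+
  moreover have "perm (pos p) = perm (pos q)"
  proof
    fix k
    obtain y where y: "k = perm (xpow n) y"
      using bij_perm[of "xpow n"] by (metis bij_pointE)
    have "perm g (perm (pos p) k) = perm g (perm (pos q) k)"
      using fun_cong[OF a, of y] \<open>n = m\<close> y by simp
    then show "perm (pos p) k = perm (pos q) k"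
      using bij_perm[of g] by (simp add: bij_def inj_eq)
  qed
  ultimately show ?thesis by simp
qed

section \<open>The star of a vertex\<close>

definition tri :: "word \<Rightarrow> gen \<Rightarrow> gen \<Rightarrow> vertex set" where
  "tri w a b = {vert w, vert (w @ pos [a]), vert (w @ pos [a, b])}"

lemma faces_eq_tri: "faces = {tri w a b | w a b c. (a, b, c) \<in> facts}"
  unfolding faces_def tri_def by blast

text \<open>The same face seen from its second vertex: \<open>w\<close> and \<open>w a b c = w x\<close> are the same vertex.\<close>
lemma tri_rotate:
  assumes "(a, b, c) \<in> facts"
  shows "tri w a b = tri (w @ pos [a]) b c"
proof -
  have "vert w = vert (w @ pos [a, b, c])"
    using vert_append_xword[of w] vert_beq[OF beq_append_left[OF beq_xword_fact[OF assms]]] by simp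
  then show ?thesis
    unfolding tri_def by (auto simp: pos_def)
qed

lemma tri_translate:
  assumes "vert g = vert w" "(a, b, c) \<in> facts"
  shows "\<exists>(a', b', c')\<in>facts. tri w a b = tri g a' b'"
proof -
  obtain k where k: "\<And>ws. vert (w @ pos ws) = vert (g @ pos (map (tau ^^ k) ws))"
    using vert_translate[OF assms(1)] by blast
  have "tri w a b = tri g ((tau ^^ k) a) ((tau ^^ k) b)"
    unfolding tri_def using assms(1) k[of "[a]"] k[of "[a, b]"] by simp
  then show ?thesis
    using facts_funpow_tau[OF assms(2)] by blast
qed

lemma face_containing_vert_eq_tri:
  assumes "T \<in> faces" "vert g \<in> T"
  shows "\<exists>(a, b, c)\<in>facts. T = tri g a b"
proof -
  obtain w a b c where T: "T = tri w a b" and f: "(a, b, c) \<in> facts"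
    using assms(1) unfolding faces_eq_tri by blast
  have f1: "(b, c, tau a) \<in> facts" and f2: "(c, tau a, tau b) \<in> facts"
    using facts_rotate[OF f] facts_rotate[OF facts_rotate[OF f]] by simp_all
  have T1: "T = tri (w @ pos [a]) b c" and T2: "T = tri (w @ pos [a, b]) c (tau a)"
    using T tri_rotate[OF f] tri_rotate[OF f1, of "w @ pos [a]"] by (simp_all add: pos_def)
  from assms(2) consider "vert g = vert w" | "vert g = vert (w @ pos [a])" | "vert g = vert (w @ pos [a, b])"
    unfolding T tri_def by blast
  then show ?thesis
    using tri_translate f f1 f2 T T1 T2 by cases metis+
qed

text \<open>The vertices of the closed star of \<open>vert g\<close> are \<open>vert (g p)\<close> for the words \<open>p\<close>
  below: the empty word, the six generators and one spelling of each of the six elements of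
  length two that divide \<open>x\<close>.\<close>
definition link_words2 :: "gen list list" where
  "link_words2 = [[Gb, Ga], [Gb, Gc], [Gc, Gd], [Ga, Gc], [Ge, Gf], [Ga, Gd]]"

definition star_words :: "gen list list" where
  "star_words = [] # map (\<lambda>s. [s]) gens @ link_words2"

definition rep2 :: "gen list \<Rightarrow> gen list" where
  "rep2 w = hd [r \<leftarrow> link_words2. r \<in> set (reach 2 [w])]"

definition vert_at :: "word \<Rightarrow> gen list \<Rightarrow> vertex" where
  "vert_at g p = vert (g @ pos p)"

lemma vert_at_Nil [simp]: "vert_at g [] = vert g"
  by (simp add: vert_at_def)

lemma inj_on_vert_at: "inj_on (vert_at g) (set star_words)"
proof (rule inj_onI)
  fix p q
  assume p: "p \<in> set star_words" and q: "q \<in> set star_words" and eq: "vert_at g p = vert_at g q"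
  have "\<forall>p\<in>set star_words. \<forall>q\<in>set star_words.
      length p < 3 \<and> (length p = length q
        \<and> map (perm (pos p)) [0, 1, 2, 3] = map (perm (pos q)) [0, 1, 2, 3] \<longrightarrow> p = q)"
    by (simp add: star_words_def link_words2_def gens_def pos_def transp_def)
  then show "p = q"
    using p q vert_append_pos_eqD[OF eq[unfolded vert_at_def]] by metis
qed

type_synonym edge = "gen list \<times> gen list"

text \<open>The link of \<open>vert g\<close>: the face \<open>tri g a b\<close> of a factorization \<open>x = a b c\<close> gives the
  edge \<open>([a], a b)\<close>.\<close>
definition link_edges :: "edge list" where
  "link_edges = map (\<lambda>(a, b, c). ([a], rep2 [a, b])) fact_list"

lemma link_edges_eq:
  "link_edges =
     [([Ga], [Ga, Gc]), ([Ga], [Ga, Gd]), ([Ga], [Gb, Ga]), ([Gb], [Gb, Ga]), ([Gb], [Gb, Gc]),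
      ([Gc], [Ga, Gc]), ([Gc], [Gc, Gd]), ([Gc], [Gb, Gc]), ([Gd], [Gc, Gd]), ([Gd], [Ga, Gd]),
      ([Ge], [Gb, Ga]), ([Ge], [Gc, Gd]), ([Ge], [Ge, Gf]), ([Gf], [Ga, Gd]), ([Gf], [Gb, Gc]),
      ([Gf], [Ge, Gf])]"
  by (simp add: link_edges_def fact_list_def rep2_def link_words2_def rels_def gens_def
      relator_alternatives_def numeral_eq_Suc)

lemma link_edge_words:
  assumes "e \<in> set link_edges"
  shows "fst e \<in> set star_words" "snd e \<in> set star_words" "length (fst e) = 1" "length (snd e) = 2"
proof -
  have "\<forall>e\<in>set link_edges. fst e \<in> set star_words \<and> snd e \<in> set star_words
      \<and> length (fst e) = 1 \<and> length (snd e) = 2"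
    by (simp add: link_edges_eq star_words_def link_words2_def gens_def)
  then show "fst e \<in> set star_words" "snd e \<in> set star_words" "length (fst e) = 1" "length (snd e) = 2"
    using assms by blast+
qed

lemma distinct_link_edges: "distinct link_edges"
  by (simp add: link_edges_eq)

definition ends :: "edge \<Rightarrow> gen list set" where
  "ends e = {fst e, snd e}"

definition star_face :: "word \<Rightarrow> edge \<Rightarrow> vertex set" where
  "star_face g e = vert_at g ` insert [] (ends e)"

lemma tri_eq_star_face:
  assumes "(a, b, c) \<in> facts"
  shows "tri g a b = star_face g ([a], rep2 [a, b])"
proof -
  have "\<forall>(a, b, c)\<in>set fact_list. rep2 [a, b] \<in> set (reach 2 [[a, b]])"
    by (simp add: fact_list_def rep2_def link_words2_def rels_def gens_def relator_alternatives_def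
        numeral_eq_Suc)
  then have "beq (pos [a, b]) (pos (rep2 [a, b]))"
    using assms beq_reach unfolding facts_eq by fastforce
  then have "vert (g @ pos [a, b]) = vert_at g (rep2 [a, b])"
    unfolding vert_at_def by (rule vert_beq[OF beq_append_left])
  then show ?thesis
    unfolding tri_def star_face_def ends_def by (simp add: vert_at_def)
qed

lemma face_at_vert_iff: "T \<in> faces \<and> vert g \<in> T \<longleftrightarrow> (\<exists>e\<in>set link_edges. T = star_face g e)"
proof -
  have edges: "set link_edges = {([a], rep2 [a, b]) | a b c. (a, b, c) \<in> facts}"
    unfolding link_edges_def facts_eq by force
  show ?thesis
  proof
    assume "T \<in> faces \<and> vert g \<in> T"
    then obtain a b c where "(a, b, c) \<in> facts" "T = tri g a b"
      using face_containing_vert_eq_tri by blast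
    then show "\<exists>e\<in>set link_edges. T = star_face g e"
      unfolding edges using tri_eq_star_face by blast
  next
    assume "\<exists>e\<in>set link_edges. T = star_face g e"
    then obtain a b c where f: "(a, b, c) \<in> facts" and T: "T = star_face g ([a], rep2 [a, b])"
      unfolding edges by blast
    then show "T \<in> faces \<and> vert g \<in> T"
      unfolding tri_eq_star_face[OF f, symmetric] faces_eq_tri by (auto simp: tri_def)
  qed
qed

lemma link_edge_ends:
  assumes "e \<in> set link_edges"
  shows "insert [] (ends e) \<subseteq> set star_words" "[] \<notin> ends e"
  using link_edge_words[OF assms] unfolding star_words_def ends_def by auto

lemma star_face_Int:
  assumes "e1 \<in> set link_edges" "e2 \<in> set link_edges"
  shows "star_face g e1 \<inter> star_face g e2 = vert_at g ` insert [] (ends e1 \<inter> ends e2)"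
  unfolding star_face_def insert_inter_insert[symmetric]
  by (rule inj_on_image_Int[OF inj_on_vert_at link_edge_ends(1)[OF assms(1)] link_edge_ends(1)[OF assms(2)],
        symmetric])

lemma star_face_subset_iff:
  assumes "S \<subseteq> set star_words" "e \<in> set link_edges"
  shows "vert_at g ` insert [] S \<subseteq> star_face g e \<longleftrightarrow> S \<subseteq> insert [] (ends e)"
proof -
  have sub: "insert [] S \<union> insert [] (ends e) \<subseteq> set star_words"
    using assms(1) link_edge_ends(1)[OF assms(2)] by blast
  have "vert_at g ` insert [] S \<subseteq> star_face g e
      \<longleftrightarrow> vert_at g ` (insert [] S \<union> insert [] (ends e)) = vert_at g ` insert [] (ends e)"
    unfolding star_face_def image_Un by (rule subset_Un_eq)
  also have "\<dots> \<longleftrightarrow> insert [] S \<union> insert [] (ends e) = insert [] (ends e)"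
    by (rule inj_on_image_eq_iff[OF inj_on_vert_at sub link_edge_ends(1)[OF assms(2)]])
  also have "\<dots> \<longleftrightarrow> S \<subseteq> insert [] (ends e)"
    by blast
  finally show ?thesis .
qed

lemma inj_on_star_face: "inj_on (star_face g) (set link_edges)"
proof (rule inj_onI)
  fix e e'
  assume e: "e \<in> set link_edges" and e': "e' \<in> set link_edges" and eq: "star_face g e = star_face g e'"
  have "insert [] (ends e) = insert [] (ends e')"
    using eq unfolding star_face_def
    by (rule inj_on_image_eq_iff[OF inj_on_vert_at link_edge_ends(1)[OF e] link_edge_ends(1)[OF e'],
          THEN iffD1])
  then have "ends e = ends e'"
    by (simp only: insert_ident[OF link_edge_ends(2)[OF e] link_edge_ends(2)[OF e']])
  then consider "fst e = fst e' \<and> snd e = snd e'" | "fst e = snd e' \<and> snd e = fst e'"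
    unfolding ends_def doubleton_eq_iff by blast
  then show "e = e'"
  proof cases
    case 2
    then show ?thesis
      using link_edge_words(3)[OF e] link_edge_words(4)[OF e'] by simp
  qed (simp add: prod_eq_iff)
qed

lemma faces_containing_star_face_Int:
  assumes "e1 \<in> set link_edges" "e2 \<in> set link_edges"
  shows "{T \<in> faces. star_face g e1 \<inter> star_face g e2 \<subseteq> T}
    = star_face g ` {e \<in> set link_edges. ends e1 \<inter> ends e2 \<subseteq> ends e}"
proof -
  define P where "P = ends e1 \<inter> ends e2"
  have P: "P \<subseteq> set star_words" "[] \<notin> P"
    using link_edge_ends[OF assms(1)] unfolding P_def by auto
  have "T \<in> faces \<and> vert_at g ` insert [] P \<subseteq> T
      \<longleftrightarrow> (\<exists>e\<in>set link_edges. T = star_face g e \<and> P \<subseteq> ends e)" for T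
  proof
    assume T: "T \<in> faces \<and> vert_at g ` insert [] P \<subseteq> T"
    then have "vert_at g [] \<in> T"
      by blast
    then obtain e where e: "e \<in> set link_edges" "T = star_face g e"
      using face_at_vert_iff T by (metis vert_at_Nil)
    then have "P \<subseteq> insert [] (ends e)"
      using T star_face_subset_iff[OF P(1) e(1)] by simp
    then have "P \<subseteq> ends e"
      using P(2) by blast
    then show "\<exists>e\<in>set link_edges. T = star_face g e \<and> P \<subseteq> ends e"
      using e by blast
  next
    assume "\<exists>e\<in>set link_edges. T = star_face g e \<and> P \<subseteq> ends e"
    then obtain e where e: "e \<in> set link_edges" "T = star_face g e" "P \<subseteq> ends e"
      by blast
    have "T \<in> faces"
      using face_at_vert_iff e(1,2) by blast
    moreover have "vert_at g ` insert [] P \<subseteq> T"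
      using star_face_subset_iff[OF P(1) e(1)] e(2,3) by blast
    ultimately show "T \<in> faces \<and> vert_at g ` insert [] P \<subseteq> T" ..
  qed
  then show ?thesis
    unfolding star_face_Int[OF assms] P_def[symmetric] by (auto simp: image_iff)
qed

definition link_lozenge :: "edge \<Rightarrow> edge \<Rightarrow> bool" where
  "link_lozenge e1 e2 \<longleftrightarrow> e1 \<in> set link_edges \<and> e2 \<in> set link_edges \<and> e1 \<noteq> e2
     \<and> card (ends e1 \<inter> ends e2) = 1 \<and> length [e \<leftarrow> link_edges. ends e1 \<inter> ends e2 \<subseteq> ends e] = 2"

definition link_lozenges :: "(edge \<times> edge) list" where
  "link_lozenges = [(e1, e2) \<leftarrow> List.product link_edges link_edges. link_lozenge e1 e2]"

lemma mem_link_lozenges: "(e1, e2) \<in> set link_lozenges \<longleftrightarrow> link_lozenge e1 e2"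
  unfolding link_lozenges_def link_lozenge_def by auto

definition lozenge_faces :: "word \<Rightarrow> edge \<times> edge \<Rightarrow> vertex set set" where
  "lozenge_faces g l = {star_face g (fst l), star_face g (snd l)}"

lemma card_star_face_Int:
  assumes "e1 \<in> set link_edges" "e2 \<in> set link_edges"
  shows "card (star_face g e1 \<inter> star_face g e2) = Suc (card (ends e1 \<inter> ends e2))"
proof -
  have "insert [] (ends e1 \<inter> ends e2) \<subseteq> set star_words" "[] \<notin> ends e1 \<inter> ends e2"
    using link_edge_ends[OF assms(1)] by auto
  then have "card (star_face g e1 \<inter> star_face g e2) = card (insert [] (ends e1 \<inter> ends e2))"
    unfolding star_face_Int[OF assms] by (intro card_image inj_on_subset[OF inj_on_vert_at])
  then show ?thesis
    using \<open>[] \<notin> ends e1 \<inter> ends e2\<close> by (simp add: ends_def)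
qed

lemma card_faces_containing_star_face_Int:
  assumes "e1 \<in> set link_edges" "e2 \<in> set link_edges"
  shows "card {T \<in> faces. star_face g e1 \<inter> star_face g e2 \<subseteq> T}
    = length [e \<leftarrow> link_edges. ends e1 \<inter> ends e2 \<subseteq> ends e]"
  unfolding faces_containing_star_face_Int[OF assms]
  by (simp add: card_image[OF inj_on_subset[OF inj_on_star_face]] distinct_card[symmetric]
      distinct_link_edges)

lemma lozenge_at_vert_iff:
  assumes "\<forall>T\<in>R. vert g \<in> T"
  shows "lozenge R \<longleftrightarrow> (\<exists>l\<in>set link_lozenges. R = lozenge_faces g l)"
proof -
  have "lozenge R \<longleftrightarrow> (\<exists>e1 e2. R = {star_face g e1, star_face g e2} \<and> link_lozenge e1 e2)"
  proof
    assume "lozenge R"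
    then obtain T1 T2 where R: "R = {T1, T2}" and T: "T1 \<in> faces" "T2 \<in> faces" "T1 \<noteq> T2"
      "card (T1 \<inter> T2) = 2" "card {T \<in> faces. T1 \<inter> T2 \<subseteq> T} = 2"
      unfolding lozenge_def by blast
    obtain e1 e2 where e: "e1 \<in> set link_edges" "T1 = star_face g e1"
      "e2 \<in> set link_edges" "T2 = star_face g e2"
      using face_at_vert_iff assms T(1,2) unfolding R by (metis insertCI)
    have "link_lozenge e1 e2"
      using T(3-5) card_star_face_Int[OF e(1,3)] card_faces_containing_star_face_Int[OF e(1,3)] e
      unfolding link_lozenge_def by auto
    then show "\<exists>e1 e2. R = {star_face g e1, star_face g e2} \<and> link_lozenge e1 e2"
      using R e by blast
  next
    assume "\<exists>e1 e2. R = {star_face g e1, star_face g e2} \<and> link_lozenge e1 e2"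
    then obtain e1 e2 where R: "R = {star_face g e1, star_face g e2}" and l: "link_lozenge e1 e2"
      by blast
    then have e: "e1 \<in> set link_edges" "e2 \<in> set link_edges" "e1 \<noteq> e2"
      unfolding link_lozenge_def by auto
    have ne: "star_face g e1 \<noteq> star_face g e2"
      using inj_on_star_face e by (meson inj_onD)
    have faces: "star_face g e1 \<in> faces" "star_face g e2 \<in> faces"
      using face_at_vert_iff e(1,2) by blast+
    show "lozenge R"
      unfolding lozenge_def R
      using ne faces card_star_face_Int[OF e(1,2)] card_faces_containing_star_face_Int[OF e(1,2)] l
      unfolding link_lozenge_def
      by (intro exI[of _ "star_face g e1"] exI[of _ "star_face g e2"]) simp
  qed
  then show ?thesis
    by (simp add: lozenge_faces_def Bex_def split_paired_Ex mem_link_lozenges conj_commute)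
qed

lemma link_lozenges_eq:
  "link_lozenges =
     [(([Ga], [Ga, Gc]), [Gc], [Ga, Gc]), (([Gb], [Gb, Ga]), [Gb], [Gb, Gc]),
      (([Gb], [Gb, Gc]), [Gb], [Gb, Ga]), (([Gc], [Ga, Gc]), [Ga], [Ga, Gc]),
      (([Gd], [Gc, Gd]), [Gd], [Ga, Gd]), (([Gd], [Ga, Gd]), [Gd], [Gc, Gd]),
      (([Ge], [Ge, Gf]), [Gf], [Ge, Gf]), (([Gf], [Ge, Gf]), [Ge], [Ge, Gf])]"
  by (simp add: link_lozenges_def link_lozenge_def link_edges_eq ends_def)

section \<open>Lozenges and hexagons in the link\<close>

definition corners :: "edge \<times> edge \<Rightarrow> gen list list" where
  "corners l = [fst (fst l), snd (fst l), fst (snd l), snd (snd l)]"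

lemma corners_link_lozenge:
  assumes "l \<in> set link_lozenges"
  shows "set (corners l) \<subseteq> set star_words" "[] \<notin> set (corners l)"
proof -
  have "fst l \<in> set link_edges" "snd l \<in> set link_edges"
    using assms mem_link_lozenges[of "fst l" "snd l"] unfolding link_lozenge_def by simp_all
  then show "set (corners l) \<subseteq> set star_words" "[] \<notin> set (corners l)"
    using link_edge_ends unfolding corners_def ends_def by auto
qed

lemma Union_lozenge_faces: "\<Union> (lozenge_faces g l) = vert_at g ` insert [] (set (corners l))"
  unfolding lozenge_faces_def star_face_def corners_def ends_def by auto

lemma lozenge_faces_disjoint_iff:
  assumes "l \<in> set link_lozenges" "f \<in> set link_lozenges"
  shows "\<Union> (lozenge_faces g l) \<inter> \<Union> (lozenge_faces g f) = {vert g}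
    \<longleftrightarrow> set (corners l) \<inter> set (corners f) = {}"
proof -
  have sub: "insert [] (set (corners l)) \<subseteq> set star_words" "insert [] (set (corners f)) \<subseteq> set star_words"
    using corners_link_lozenge(1) assms by (auto simp: star_words_def)
  have "\<Union> (lozenge_faces g l) \<inter> \<Union> (lozenge_faces g f)
      = vert_at g ` insert [] (set (corners l) \<inter> set (corners f))"
    unfolding Union_lozenge_faces insert_inter_insert[symmetric]
    by (rule inj_on_image_Int[OF inj_on_vert_at sub, symmetric])
  also have "\<dots> = vert_at g ` {[]} \<longleftrightarrow> insert [] (set (corners l) \<inter> set (corners f)) = {[]}"
    by (rule inj_on_image_eq_iff[OF inj_on_vert_at]) (use sub in \<open>auto simp: star_words_def\<close>)
  finally show ?thesis
    using corners_link_lozenge(2)[OF assms(1)] by auto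
qed

definition link_adjacent :: "gen list \<Rightarrow> gen list \<Rightarrow> bool" where
  "link_adjacent x y \<longleftrightarrow> (x, y) \<in> set link_edges \<or> (y, x) \<in> set link_edges"

definition link_hexagon :: "gen list list \<Rightarrow> bool" where
  "link_hexagon hl \<longleftrightarrow> length hl = 6 \<and> distinct hl \<and> set hl \<subseteq> set star_words - {[]}
     \<and> (\<forall>i<6. link_adjacent (hl ! i) (hl ! ((i + 1) mod 6)))"

definition on_hexagon :: "gen list list \<Rightarrow> edge \<Rightarrow> bool" where
  "on_hexagon hl e \<longleftrightarrow> (\<exists>i<6. e = (hl ! i, hl ! ((i + 1) mod 6)) \<or> e = (hl ! ((i + 1) mod 6), hl ! i))"

definition star_hexagon :: "word \<Rightarrow> gen list list \<Rightarrow> vertex set set" where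
  "star_hexagon g hl = {{vert g, vert_at g (hl ! i), vert_at g (hl ! ((i + 1) mod 6))} | i. i < 6}"

lemma star_face_eq: "star_face g e = {vert g, vert_at g (fst e), vert_at g (snd e)}"
  unfolding star_face_def ends_def by simp

lemma flat_hexagon_star_hexagon:
  assumes "link_hexagon hl"
  shows "flat_hexagon (star_hexagon g hl)"
proof -
  have len: "length hl = 6" and dist: "distinct hl" and words: "set hl \<subseteq> set star_words - {[]}"
    and adj: "\<And>i. i < 6 \<Longrightarrow> link_adjacent (hl ! i) (hl ! ((i + 1) mod 6))"
    using assms unfolding link_hexagon_def by auto
  define u where "u i = vert_at g (hl ! i)" for i
  have hl: "hl ! i \<in> set star_words" "hl ! i \<noteq> []" if "i < 6" for i
  proof -
    have "hl ! i \<in> set hl"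
      using that len by simp
    then show "hl ! i \<in> set star_words" "hl ! i \<noteq> []"
      using words by auto
  qed
  have "inj_on u {..<6}"
  proof (rule inj_onI)
    fix i j assume "i \<in> {..<6}" "j \<in> {..<6}" "u i = u j"
    then show "i = j"
      using inj_onD[OF inj_on_vert_at _ hl(1) hl(1)] nth_eq_iff_index_eq[OF dist] len
      unfolding u_def by simp
  qed
  moreover have "vert g \<notin> u ` {..<6}"
  proof
    assume "vert g \<in> u ` {..<6}"
    then obtain i where i: "i < 6" "vert_at g [] = vert_at g (hl ! i)"
      unfolding u_def by auto
    then have "[] = hl ! i"
      using inj_onD[OF inj_on_vert_at i(2)] hl(1) by (simp add: star_words_def)
    then show False
      using hl(2)[OF i(1)] by simp
  qed
  moreover have "star_hexagon g hl \<subseteq> faces"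
  proof
    fix T assume "T \<in> star_hexagon g hl"
    then obtain i where i: "i < 6" and T: "T = {vert g, vert_at g (hl ! i), vert_at g (hl ! ((i + 1) mod 6))}"
      unfolding star_hexagon_def by blast
    have "T = star_face g (hl ! i, hl ! ((i + 1) mod 6))" "T = star_face g (hl ! ((i + 1) mod 6), hl ! i)"
      unfolding T star_face_eq by (simp_all add: insert_commute)
    then show "T \<in> faces"
      using adj[OF i] face_at_vert_iff unfolding link_adjacent_def by blast
  qed
  moreover have "star_hexagon g hl = {{vert g, u i, u ((i + 1) mod 6)} | i. i < 6}"
    unfolding star_hexagon_def u_def ..
  ultimately show ?thesis
    unfolding flat_hexagon_def by blast
qed

lemma star_face_mem_star_hexagon:
  assumes "on_hexagon hl e"
  shows "star_face g e \<in> star_hexagon g hl"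
  using assms unfolding on_hexagon_def star_hexagon_def star_face_eq by (auto simp: insert_commute)

lemma card_cycle6_independent_le:
  fixes J :: "nat set"
  assumes "J \<subseteq> {..<6}" "\<And>i. i \<in> J \<Longrightarrow> (i + 1) mod 6 \<notin> J"
  shows "card J \<le> 3"
proof -
  have pair: "card (J \<inter> {i, i + 1}) \<le> 1" if "i < 5" for i
    using assms(2)[of i] that by (auto simp: card_le_Suc0_iff_eq)
  have "J \<subseteq> (J \<inter> {0, 1}) \<union> (J \<inter> {2, 3}) \<union> (J \<inter> {4, 5})"
  proof
    fix x assume "x \<in> J"
    moreover have "x < 6"
      using assms(1) \<open>x \<in> J\<close> by auto
    then have "x = 0 \<or> x = 1 \<or> x = 2 \<or> x = 3 \<or> x = 4 \<or> x = 5"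
      by presburger
    ultimately show "x \<in> (J \<inter> {0, 1}) \<union> (J \<inter> {2, 3}) \<union> (J \<inter> {4, 5})"
      by blast
  qed
  then have "card J \<le> card ((J \<inter> {0, 1}) \<union> (J \<inter> {2, 3}) \<union> (J \<inter> {4, 5}))"
    by (intro card_mono) auto
  also have "\<dots> \<le> card (J \<inter> {0, 1}) + card (J \<inter> {2, 3}) + card (J \<inter> {4, 5})"
    by (meson card_Un_le add_right_mono order_trans)
  also have "\<dots> \<le> 3"
    using pair[of 0] pair[of 2] pair[of 4] by simp
  finally show ?thesis .
qed

lemma face_at_vert_words:
  assumes "{vert g, v, v'} \<in> faces" "v \<noteq> vert g" "v' \<noteq> vert g" "v \<noteq> v'"
  obtains x y where "x \<in> set star_words" "vert_at g x = v" "y \<in> set star_words" "vert_at g y = v'"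
    and "length x + length y = 3"
proof -
  obtain e where e: "e \<in> set link_edges" "{vert g, v, v'} = star_face g e"
    using assms(1) face_at_vert_iff by blast
  have "v \<in> star_face g e" "v' \<in> star_face g e"
    by (metis e(2) insertCI)+
  then have "v \<in> {vert_at g (fst e), vert_at g (snd e)}" "v' \<in> {vert_at g (fst e), vert_at g (snd e)}"
    using assms(2,3) unfolding star_face_eq by auto
  then consider "v = vert_at g (fst e)" "v' = vert_at g (snd e)"
    | "v = vert_at g (snd e)" "v' = vert_at g (fst e)"
    using assms(4) by blast
  then show ?thesis
    using that link_edge_words[OF e(1)] by cases auto
qed

text \<open>Every edge of the link joins a generator to a word of length two, so the lengths of the words
  along the rim of a flat hexagon centred at \<open>vert g\<close> alternate between \<open>1\<close> and \<open>2\<close>.\<close>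
lemma hexagon_rim_words:
  fixes u :: "nat \<Rightarrow> vertex"
  assumes inj: "inj_on u {..<6}" and centre: "vert g \<notin> u ` {..<6}"
    and faces: "\<And>i. i < 6 \<Longrightarrow> {vert g, u i, u ((i + 1) mod 6)} \<in> faces"
  obtains w where "\<And>i. i < 6 \<Longrightarrow> w i \<in> set star_words \<and> vert_at g (w i) = u i"
    and "\<And>i. i < 6 \<Longrightarrow> length (w i) + length (w ((i + 1) mod 6)) = 3"
proof -
  have words: "\<exists>x y. x \<in> set star_words \<and> vert_at g x = u i \<and> y \<in> set star_words
      \<and> vert_at g y = u ((i + 1) mod 6) \<and> length x + length y = 3" if i: "i < 6" for i
  proof -
    have "(i + 1) mod 6 < 6" "(i + 1) mod 6 \<noteq> i"
      using i by (auto simp: mod_if)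
    then have "u i \<noteq> vert g" "u ((i + 1) mod 6) \<noteq> vert g" "u i \<noteq> u ((i + 1) mod 6)"
      using centre i inj_onD[OF inj, of i "(i + 1) mod 6"] by auto
    then show ?thesis
      using face_at_vert_words[OF faces[OF i]] by metis
  qed
  then have "\<forall>i\<in>{..<6}. \<exists>x. x \<in> set star_words \<and> vert_at g x = u i"
    by blast
  then obtain w where "\<forall>i\<in>{..<6}. w i \<in> set star_words \<and> vert_at g (w i) = u i"
    using bchoice by metis
  then have w: "\<And>i. i < 6 \<Longrightarrow> w i \<in> set star_words \<and> vert_at g (w i) = u i"
    by blast
  moreover have "length (w i) + length (w ((i + 1) mod 6)) = 3" if i: "i < 6" for i
  proof -
    obtain x y where xy: "x \<in> set star_words" "vert_at g x = u i" "y \<in> set star_words"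
      "vert_at g y = u ((i + 1) mod 6)" "length x + length y = 3"
      using words[OF i] by blast
    have "x = w i" "y = w ((i + 1) mod 6)"
      using inj_onD[OF inj_on_vert_at, of g x "w i"] inj_onD[OF inj_on_vert_at, of g y "w ((i + 1) mod 6)"]
        xy w[OF i] w[of "(i + 1) mod 6"] by auto
    then show ?thesis
      using xy(5) by simp
  qed
  ultimately show ?thesis
    using that by blast
qed

lemma card_rim_words_le:
  fixes u :: "nat \<Rightarrow> vertex"
  assumes "inj_on u {..<6}" "vert g \<notin> u ` {..<6}" "\<And>i. i < 6 \<Longrightarrow> {vert g, u i, u ((i + 1) mod 6)} \<in> faces"
    and Q: "Q \<subseteq> set star_words" "\<And>x. x \<in> Q \<Longrightarrow> length x = k" "vert_at g ` Q \<subseteq> u ` {..<6}"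
  shows "card Q \<le> 3"
proof -
  obtain w where w: "\<And>i. i < 6 \<Longrightarrow> w i \<in> set star_words \<and> vert_at g (w i) = u i"
    and alternate: "\<And>i. i < 6 \<Longrightarrow> length (w i) + length (w ((i + 1) mod 6)) = 3"
    using hexagon_rim_words[OF assms(1-3)] by blast
  define J where "J = {j. j < 6 \<and> length (w j) = k}"
  have "Q \<subseteq> w ` J"
  proof
    fix x assume x: "x \<in> Q"
    then obtain j where j: "j < 6" "vert_at g x = u j"
      using Q(3) by blast
    then have "x = w j"
      using inj_onD[OF inj_on_vert_at, of g x "w j"] j(2) w[OF j(1)] Q(1) x by auto
    then show "x \<in> w ` J"
      using j(1) Q(2)[OF x] unfolding J_def by blast
  qed
  then have "card Q \<le> card (w ` J)"
    by (intro card_mono) (auto simp: J_def)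
  also have "\<dots> \<le> card J"
    by (rule card_image_le) (simp add: J_def)
  also have "\<dots> \<le> 3"
  proof (rule card_cycle6_independent_le)
    show "J \<subseteq> {..<6}"
      unfolding J_def by auto
  next
    fix i assume "i \<in> J"
    then show "(i + 1) mod 6 \<notin> J"
      using alternate[of i] unfolding J_def by auto presburger
  qed
  finally show ?thesis .
qed

definition balanced :: "gen list list \<Rightarrow> bool" where
  "balanced ws \<longleftrightarrow> (\<forall>k\<in>{1, 2}. card (set [w \<leftarrow> ws. length w = k]) \<le> 3)"

definition partners :: "edge \<times> edge \<Rightarrow> (edge \<times> edge) list" where
  "partners l =
     [f \<leftarrow> link_lozenges. set (corners l) \<inter> set (corners f) = {} \<and> balanced (corners l @ corners f)]"

definition in_link_hexagon :: "edge \<times> edge \<Rightarrow> edge \<times> edge \<Rightarrow> bool" where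
  "in_link_hexagon l f \<longleftrightarrow> (\<exists>hl. link_hexagon hl \<and> (\<forall>e\<in>{fst l, snd l, fst f, snd f}. on_hexagon hl e))"

text \<open>The path of length two in the link traced by a lozenge, through its vertex of degree two.\<close>
definition lozenge_path :: "edge \<times> edge \<Rightarrow> gen list list" where
  "lozenge_path l = (if fst (fst l) = fst (snd l) then [snd (fst l), fst (fst l), snd (snd l)]
                     else [fst (fst l), snd (fst l), fst (snd l)])"

lemma all_less_six: "(\<forall>i<6. P i) \<longleftrightarrow> P 0 \<and> P 1 \<and> P 2 \<and> P 3 \<and> P 4 \<and> P (5 :: nat)"
  by (auto simp: less_Suc_eq_0_disj eval_nat_numeral)

lemma ex_less_six: "(\<exists>i<6. P i) \<longleftrightarrow> P 0 \<or> P 1 \<or> P 2 \<or> P 3 \<or> P 4 \<or> P (5 :: nat)"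
  using all_less_six[of "\<lambda>i. \<not> P i"] by blast

text \<open>The two link paths of a lozenge and of each of its partners close up to a hexagon of the
  link, in one of the two possible ways.\<close>
lemma partners_in_link_hexagon:
  assumes "l \<in> set link_lozenges" "f \<in> set (partners l)"
  shows "in_link_hexagon l f"
proof -
  have "\<forall>l\<in>set link_lozenges. \<forall>f\<in>set (partners l).
      \<exists>hl\<in>{lozenge_path l @ lozenge_path f, lozenge_path l @ rev (lozenge_path f)}.
        link_hexagon hl \<and> (\<forall>e\<in>{fst l, snd l, fst f, snd f}. on_hexagon hl e)"
    by (simp add: link_lozenges_eq partners_def corners_def balanced_def card_set lozenge_path_def
        link_hexagon_def on_hexagon_def link_adjacent_def all_less_six ex_less_six link_edges_eq
        star_words_def link_words2_def gens_def del: set_filter)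
  then show ?thesis
    using assms unfolding in_link_hexagon_def by blast
qed

lemma card_partner_pairs:
  assumes "l \<in> set link_lozenges"
  shows "card ((\<lambda>(f1, f2). {f1, f2}) ` set (partners l)) = 2"
proof -
  have "\<forall>l\<in>set link_lozenges. card ((\<lambda>(f1, f2). {f1, f2}) ` set (partners l)) = 2"
    by (simp add: link_lozenges_eq partners_def corners_def balanced_def card_set card_insert_if
        doubleton_eq_iff del: set_filter)
  then show ?thesis
    using assms by blast
qed

definition hexagon_partner :: "vertex set set \<Rightarrow> vertex \<Rightarrow> vertex set set \<Rightarrow> bool" where
  "hexagon_partner R A R1 \<longleftrightarrow> lozenge R1 \<and> \<Union> R \<inter> \<Union> R1 = {A} \<and> (\<exists>H. flat_hexagon H \<and> R \<union> R1 \<subseteq> H)"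

lemma vert_mem_lozenge_faces: "T \<in> lozenge_faces g l \<Longrightarrow> vert g \<in> T"
  unfolding lozenge_faces_def star_face_def by auto

lemma in_link_hexagon_imp_flat_hexagon:
  assumes "in_link_hexagon l f"
  shows "\<exists>H. flat_hexagon H \<and> lozenge_faces g l \<union> lozenge_faces g f \<subseteq> H"
proof -
  obtain hl where "link_hexagon hl" and "\<forall>e\<in>{fst l, snd l, fst f, snd f}. on_hexagon hl e"
    using assms unfolding in_link_hexagon_def by blast
  then have "flat_hexagon (star_hexagon g hl)"
    and "lozenge_faces g l \<union> lozenge_faces g f \<subseteq> star_hexagon g hl"
    using flat_hexagon_star_hexagon star_face_mem_star_hexagon unfolding lozenge_faces_def by auto
  then show ?thesis
    by blast
qed

lemma partners_imp_hexagon_partner: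
  assumes "l \<in> set link_lozenges" "f \<in> set (partners l)"
  shows "hexagon_partner (lozenge_faces g l) (vert g) (lozenge_faces g f)"
proof -
  have f: "f \<in> set link_lozenges" and disj: "set (corners l) \<inter> set (corners f) = {}"
    using assms(2) unfolding partners_def by auto
  have "lozenge (lozenge_faces g f)"
    using lozenge_at_vert_iff[of "lozenge_faces g f" g] f vert_mem_lozenge_faces by blast
  moreover have "\<Union> (lozenge_faces g l) \<inter> \<Union> (lozenge_faces g f) = {vert g}"
    using lozenge_faces_disjoint_iff[OF assms(1) f] disj by blast
  ultimately show ?thesis
    unfolding hexagon_partner_def
    using in_link_hexagon_imp_flat_hexagon[OF partners_in_link_hexagon[OF assms]] by blast
qed

lemma balanced_corners_in_flat_hexagon:
  fixes u :: "nat \<Rightarrow> vertex"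
  assumes l: "l \<in> set link_lozenges" and f: "f \<in> set link_lozenges"
    and inj: "inj_on u {..<6}" and centre: "vert g \<notin> u ` {..<6}"
    and H: "H = {{vert g, u i, u ((i + 1) mod 6)} | i. i < 6}" "H \<subseteq> faces"
    and sub: "lozenge_faces g l \<union> lozenge_faces g f \<subseteq> H"
  shows "balanced (corners l @ corners f)"
proof -
  have faces: "\<And>i. i < 6 \<Longrightarrow> {vert g, u i, u ((i + 1) mod 6)} \<in> faces"
    using H by blast
  have "card (set [w \<leftarrow> corners l @ corners f. length w = k]) \<le> 3" for k
  proof (rule card_rim_words_le[OF inj centre faces])
    show "set [w \<leftarrow> corners l @ corners f. length w = k] \<subseteq> set star_words"
      using corners_link_lozenge(1)[OF l] corners_link_lozenge(1)[OF f] by auto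
    show "\<And>x. x \<in> set [w \<leftarrow> corners l @ corners f. length w = k] \<Longrightarrow> length x = k"
      by auto
    show "vert_at g ` set [w \<leftarrow> corners l @ corners f. length w = k] \<subseteq> u ` {..<6}"
    proof
      fix v assume "v \<in> vert_at g ` set [w \<leftarrow> corners l @ corners f. length w = k]"
      then obtain x where x: "x \<in> set (corners l) \<union> set (corners f)" "v = vert_at g x"
        by auto
      have "x \<in> set star_words" "x \<noteq> []" "[] \<in> set star_words"
        using x(1) corners_link_lozenge[OF l] corners_link_lozenge[OF f] by (auto simp: star_words_def)
      then have "v \<noteq> vert g"
        using inj_onD[OF inj_on_vert_at, of g x "[]"] x(2) by auto
      moreover have "v \<in> \<Union> (lozenge_faces g l) \<union> \<Union> (lozenge_faces g f)"
        using x unfolding Union_lozenge_faces by blast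
      then have "v \<in> \<Union> H"
        using sub by blast
      ultimately show "v \<in> u ` {..<6}"
        using H(1) by auto
    qed
  qed
  then show ?thesis
    unfolding balanced_def by blast
qed

text \<open>The centre of the hexagon lies in both lozenges, so it is \<open>vert g\<close>.\<close>
lemma hexagon_partner_imp_partners:
  assumes l: "l \<in> set link_lozenges" and P: "hexagon_partner (lozenge_faces g l) (vert g) R1"
  shows "\<exists>f\<in>set (partners l). R1 = lozenge_faces g f"
proof -
  obtain H where R1: "lozenge R1" and disj: "\<Union> (lozenge_faces g l) \<inter> \<Union> R1 = {vert g}"
    and H: "flat_hexagon H" "lozenge_faces g l \<union> R1 \<subseteq> H"
    using P unfolding hexagon_partner_def by blast
  obtain c and u :: "nat \<Rightarrow> vertex" where inj: "inj_on u {..<6}" and c: "c \<notin> u ` {..<6}"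
    and H_eq: "H = {{c, u i, u ((i + 1) mod 6)} | i. i < 6}" and H_faces: "H \<subseteq> faces"
    using H(1) unfolding flat_hexagon_def by blast
  have c_in: "c \<in> T" if "T \<in> H" for T
    using that H_eq by auto
  have "R1 \<noteq> {}"
    using R1 unfolding lozenge_def by auto
  then have "c \<in> \<Union> R1"
    using H(2) c_in by blast
  moreover have "c \<in> \<Union> (lozenge_faces g l)"
    using H(2) c_in unfolding lozenge_faces_def by blast
  ultimately have c_vert: "c = vert g"
    using disj by blast
  then have "\<forall>T\<in>R1. vert g \<in> T"
    using H(2) c_in by blast
  then obtain f where f: "f \<in> set link_lozenges" "R1 = lozenge_faces g f"
    using lozenge_at_vert_iff R1 by blast
  have "set (corners l) \<inter> set (corners f) = {}"
    using disj lozenge_faces_disjoint_iff[OF l f(1)] f(2) by simp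
  moreover have "balanced (corners l @ corners f)"
    using balanced_corners_in_flat_hexagon[OF l f(1) inj _ _ H_faces] c H_eq H(2) f(2) c_vert by blast
  ultimately have "f \<in> set (partners l)"
    using f(1) unfolding partners_def by simp
  then show ?thesis
    using f(2) by blast
qed

lemma card_lozenge_faces_partners:
  assumes "l \<in> set link_lozenges"
  shows "card (lozenge_faces g ` set (partners l)) = 2"
proof -
  let ?pair = "\<lambda>(f1, f2). {f1, f2}"
  have eq: "lozenge_faces g ` set (partners l) = image (star_face g) ` (?pair ` set (partners l))"
    unfolding lozenge_faces_def image_image by (auto simp: case_prod_beta)
  have "?pair ` set (partners l) \<subseteq> Pow (set link_edges)"
    unfolding partners_def using mem_link_lozenges unfolding link_lozenge_def by auto
  then have "card (image (star_face g) ` (?pair ` set (partners l))) = card (?pair ` set (partners l))"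
    by (intro card_image inj_on_subset[OF inj_on_image_Pow[OF inj_on_star_face]])
  then show ?thesis
    unfolding eq using card_partner_pairs[OF assms] by simp
qed

theorem lemma12:
  assumes "lozenge R"
    and "A \<in> \<Inter> R"
  shows "card {R1. lozenge R1 \<and> \<Union> R \<inter> \<Union> R1 = {A}
                 \<and> (\<exists>H. flat_hexagon H \<and> R \<union> R1 \<subseteq> H)} = 2"
proof -
  obtain T where "T \<in> R" "T \<in> faces"
    using assms(1) unfolding lozenge_def by blast
  then obtain g where A: "A = vert g"
    using assms(2) unfolding faces_def by blast
  obtain l where l: "l \<in> set link_lozenges" and R: "R = lozenge_faces g l"
    using lozenge_at_vert_iff[of R g] assms A by blast
  have "{R1. hexagon_partner R A R1} = lozenge_faces g ` set (partners l)"
    unfolding R A using partners_imp_hexagon_partner[OF l] hexagon_partner_imp_partners[OF l] by blast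
  then show ?thesis
    using card_lozenge_faces_partners[OF l] unfolding hexagon_partner_def by simp
qed

end
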